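(* Let $V=\{1,\dots,n\}$ and let $D,D'$ be self-adjoint $n\times n$ complex matrices, with associated weighted graphs $G$ and $G'$ on $V$, both connected. Suppose there are pairs $(i_1,j_1),\dots,(i_k,j_k)$ of distinct vertices such that the $2k$ vertices $i_1,j_1,\dots,i_k,j_k$ are pairwise distinct (the edges $\{i_s,j_s\}$ are pairwise unconnected), such that $D$ and $D'$ have the same entries except at the positions $(i_s,j_s)$ and $(j_s,i_s)$, and such that for each $s$ exactly one of $D_{i_sj_s}$, $D'_{i_sj_s}$ is zero and the other has modulus $1/w_s$ with $w_s\in(0,\infty)$ (so $G$ and $G'$ differ by addition or deletion of the edges $\{i_s,j_s\}$ of weights $w_s$). Let $x,y\in V$, let $d=d^D(x,y)$, $d'=d^{D'}(x,y)$, and put $$m=\max_{s=1,\dots,k}\frac{d^D(i_s,j_s)}{w_s},\qquad m'=\max_{s=1,\dots,k}\frac{d^{D'}(i_s,j_s)}{w_s}.$$ Then $$\frac{d}{1+m}\le d'\le (1+m')\,d.$$ In the particular case where $k=1$ and the single added/removed edge, of weight $w$, connects $x$ and $y$, one has $$\left|\frac{1}{d}-\frac{1}{d'}\right|\le\frac{1}{w}.$$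
   Context: For a self-adjoint $n\times n$ matrix $M$, the weighted graph associated with $M$ has vertex set $\{1,\dots,n\}$ and an edge $\{i,j\}$ ($i\neq j$) of weight $|M_{ij}|^{-1}$ whenever $M_{ij}\neq 0$. The noncommutative distance is $d^M(i,j)=\sup\{|a(i)-a(j)| : a\in\mathbb{C}^n,\ \|[M,\pi(a)]\|\le 1\}$, where $\pi(a)=\mathrm{diag}(a(1),\dots,a(n))$ and $\|\cdot\|$ is the operator norm. *)

theory Defs
  imports "HOL-Analysis.Analysis"
begin

text \<open>Vertex set V = {1..n} is modelled by a finite index type 'n; matrices are
  complex^'n^'n, vectors complex^'n with the Euclidean (l2) norm, so onorm is the
  usual operator norm.\<close>

definition self_adjoint :: "complex^'n^'n \<Rightarrow> bool" where
  "self_adjoint M \<longleftrightarrow> (\<forall>i j. M$i$j = cnj (M$j$i))"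

definition diag_mat :: "('n::finite \<Rightarrow> complex) \<Rightarrow> complex^'n^'n" where
  "diag_mat a = (\<chi> i j. if i = j then a i else 0)"

definition commutator_norm :: "complex^'n^'n \<Rightarrow> ('n::finite \<Rightarrow> complex) \<Rightarrow> real" where
  "commutator_norm M a = onorm (\<lambda>v::complex^'n. (M ** diag_mat a - diag_mat a ** M) *v v)"

definition nc_dist :: "complex^'n^'n \<Rightarrow> 'n::finite \<Rightarrow> 'n \<Rightarrow> real" where
  "nc_dist M i j = Sup {cmod (a i - a j) | a. commutator_norm M a \<le> 1}"

text \<open>Edge relation of the weighted graph associated with M (weights |M_ij|^-1 do
  not affect connectivity).\<close>
definition graph_edges :: "complex^'n^'n \<Rightarrow> ('n \<times> 'n) set" where
  "graph_edges M = {(i, j). i \<noteq> j \<and> M$i$j \<noteq> 0}"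

definition graph_connected :: "complex^'n^'n \<Rightarrow> bool" where
  "graph_connected M \<longleftrightarrow> (\<forall>i j. (i, j) \<in> (graph_edges M)\<^sup>*)"

end

theory Submission
  imports Defs
begin

text \<open>Every a admissible for D (\<open>\<parallel>[D, \<pi>(a)]\<parallel> \<le> 1\<close>) is nearly admissible for D', because
  \<open>[D', \<pi>(a)] = [D, \<pi>(a)] + [D' - D, \<pi>(a)]\<close> and the second commutator is supported on the
  pairwise disjoint changed edges. It therefore has at most one nonzero entry in each row and
  column, so its norm is its largest entry \<open>|a(i\<^sub>s) - a(j\<^sub>s)| / w\<^sub>s \<le> d\<^sup>D(i\<^sub>s, j\<^sub>s) / w\<^sub>s \<le> m\<close>.
  Hence \<open>a / (1 + m)\<close> is admissible for D', which gives \<open>d \<le> (1 + m) d'\<close>; exchanging D and D'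
  gives the other bound. When the only changed edge joins x and y, \<open>m = d / w\<close> and
  \<open>m' = d' / w\<close>, and the two bounds rearrange to \<open>|1/d - 1/d'| \<le> 1/w\<close>.\<close>

definition commutator :: "complex^'n^'n \<Rightarrow> ('n::finite \<Rightarrow> complex) \<Rightarrow> complex^'n^'n" where
  "commutator M a = M ** diag_mat a - diag_mat a ** M"

lemma commutator_norm_eq_onorm: "commutator_norm M a = onorm ((*v) (commutator M a))"
  unfolding commutator_norm_def commutator_def by simp

lemma commutator_nth: "commutator M a $ p $ q = M$p$q * (a q - a p)"
  unfolding commutator_def diag_mat_def matrix_matrix_mult_def
  by (simp add: if_distrib if_distribR right_diff_distrib mult.commute cong: if_cong)

lemma commutator_add: "commutator (A + B) a = commutator A a + commutator B a"
  by (simp add: vec_eq_iff commutator_nth algebra_simps)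

lemma commutator_scale: "commutator M (\<lambda>p. of_real c * a p) = c *\<^sub>R commutator M a"
  by (simp add: vec_eq_iff commutator_nth) (simp add: scaleR_conv_of_real algebra_simps)

lemma commutator_norm_nonneg: "0 \<le> commutator_norm M a"
  unfolding commutator_norm_eq_onorm by (rule onorm_pos_le[OF matrix_vector_mul_bounded_linear])

lemma commutator_norm_zero: "commutator_norm M (\<lambda>_. 0) = 0"
proof -
  have "(*v) (commutator M (\<lambda>_. 0)) = (\<lambda>v. 0)"
    by (simp add: fun_eq_iff vec_eq_iff commutator_nth matrix_vector_mult_def)
  then show ?thesis
    unfolding commutator_norm_eq_onorm by (simp add: onorm_zero)
qed

lemma commutator_norm_scale:
  "commutator_norm M (\<lambda>p. of_real c * a p) = \<bar>c\<bar> * commutator_norm M a"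
proof -
  have "(*v) (commutator M (\<lambda>p. of_real c * a p)) = (\<lambda>v. c *\<^sub>R (commutator M a *v v))"
    by (simp add: fun_eq_iff commutator_scale vec_eq_iff matrix_vector_mult_def scaleR_sum_right)
  then show ?thesis
    unfolding commutator_norm_eq_onorm
    by (simp add: onorm_scaleR matrix_vector_mul_bounded_linear)
qed

lemma commutator_norm_add_le:
  "commutator_norm (A + B) a \<le> commutator_norm A a + commutator_norm B a"
  unfolding commutator_norm_eq_onorm commutator_add matrix_vector_mult_add_rdistrib
  by (rule onorm_triangle[OF matrix_vector_mul_bounded_linear matrix_vector_mul_bounded_linear])

lemma norm_nth_le_onorm: "cmod (A$p$q) \<le> onorm ((*v) (A::complex^'n::finite^'m))"
proof -
  have "(A *v axis q 1) $ p = A$p$q"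
    unfolding matrix_vector_mult_def axis_def by (simp add: if_distrib cong: if_cong)
  moreover have "norm ((A *v axis q 1) $ p) \<le> norm (A *v axis q 1)"
    by (rule Finite_Cartesian_Product.norm_nth_le)
  moreover have "norm (A *v axis q 1) \<le> onorm ((*v) A) * norm (axis q (1::complex))"
    by (rule onorm[OF matrix_vector_mul_bounded_linear])
  ultimately show ?thesis
    by simp
qed

lemma norm_nth_mult_le_commutator_norm:
  "cmod (M$p$q) * cmod (a p - a q) \<le> commutator_norm M a"
  using norm_nth_le_onorm[of "commutator M a" p q]
  by (simp add: commutator_norm_eq_onorm commutator_nth norm_mult norm_minus_commute)

definition partial_monomial :: "'a::zero^'n^'m \<Rightarrow> bool" where
  "partial_monomial B \<longleftrightarrow>
     (\<forall>p q q'. B$p$q \<noteq> 0 \<longrightarrow> B$p$q' \<noteq> 0 \<longrightarrow> q = q') \<and>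
     (\<forall>p p' q. B$p$q \<noteq> 0 \<longrightarrow> B$p'$q \<noteq> 0 \<longrightarrow> p = p')"

lemma sum_eq_single_nonzero:
  fixes f :: "'a::finite \<Rightarrow> 'b::comm_monoid_add"
  assumes "\<And>q q'. f q \<noteq> 0 \<Longrightarrow> f q' \<noteq> 0 \<Longrightarrow> q = q'"
  obtains q0 where "(\<Sum>q\<in>UNIV. f q) = f q0"
proof (cases "\<exists>q0. f q0 \<noteq> 0")
  case True
  then obtain q0 where "f q0 \<noteq> 0" by blast
  then have "(\<Sum>q\<in>UNIV. f q) = sum f {q0}"
    using assms by (intro sum.mono_neutral_right) auto
  then show ?thesis using that by simp
next
  case False
  then show ?thesis using that by simp
qed

lemma onorm_partial_monomial_le:
  fixes B :: "complex^'n::finite^'m::finite"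
  assumes "partial_monomial B" and entry_le: "\<And>p q. cmod (B$p$q) \<le> m"
  shows "onorm ((*v) B) \<le> m"
proof -
  have m_nonneg: "0 \<le> m"
    using entry_le norm_ge_zero order_trans by blast
  have row_le: "(cmod ((B *v v)$p))\<^sup>2 \<le> (\<Sum>q\<in>UNIV. (cmod (B$p$q))\<^sup>2 * (cmod (v$q))\<^sup>2)"
    for p and v :: "complex^'n"
  proof -
    obtain q0 where "(\<Sum>q\<in>UNIV. B$p$q * v$q) = B$p$q0 * v$q0"
      by (rule sum_eq_single_nonzero[of "\<lambda>q. B$p$q * v$q"])
        (use assms(1) in \<open>auto simp: partial_monomial_def\<close>)
    then have "(cmod ((B *v v)$p))\<^sup>2 = (cmod (B$p$q0))\<^sup>2 * (cmod (v$q0))\<^sup>2"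
      by (simp add: matrix_vector_mult_def norm_mult power_mult_distrib)
    also have "\<dots> \<le> (\<Sum>q\<in>UNIV. (cmod (B$p$q))\<^sup>2 * (cmod (v$q))\<^sup>2)"
      by (rule member_le_sum) auto
    finally show ?thesis .
  qed
  have column_le: "(\<Sum>p\<in>UNIV. (cmod (B$p$q))\<^sup>2) \<le> m\<^sup>2" for q
  proof -
    obtain p0 where "(\<Sum>p\<in>UNIV. (cmod (B$p$q))\<^sup>2) = (cmod (B$p0$q))\<^sup>2"
      by (rule sum_eq_single_nonzero[of "\<lambda>p. (cmod (B$p$q))\<^sup>2"])
        (use assms(1) in \<open>auto simp: partial_monomial_def\<close>)
    then show ?thesis
      using entry_le[of p0 q] by (simp add: power_mono)
  qed
  show ?thesis
  proof (rule onorm_bound[OF m_nonneg])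
    fix v :: "complex^'n"
    have "(norm (B *v v))\<^sup>2 = (\<Sum>p\<in>UNIV. (cmod ((B *v v)$p))\<^sup>2)"
      by (simp add: norm_vec_def L2_set_def sum_nonneg)
    also have "\<dots> \<le> (\<Sum>p\<in>UNIV. \<Sum>q\<in>UNIV. (cmod (B$p$q))\<^sup>2 * (cmod (v$q))\<^sup>2)"
      by (intro sum_mono row_le)
    also have "\<dots> = (\<Sum>q\<in>UNIV. (cmod (v$q))\<^sup>2 * (\<Sum>p\<in>UNIV. (cmod (B$p$q))\<^sup>2))"
      by (subst sum.swap) (simp add: sum_distrib_left mult.commute)
    also have "\<dots> \<le> (\<Sum>q\<in>UNIV. (cmod (v$q))\<^sup>2 * m\<^sup>2)"
      by (intro sum_mono mult_left_mono column_le) simp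
    also have "\<dots> = (m * norm v)\<^sup>2"
      by (simp add: norm_vec_def L2_set_def sum_nonneg sum_distrib_left power_mult_distrib mult.commute)
    finally show "norm (B *v v) \<le> m * norm v"
      by (rule power2_le_imp_le) (simp add: m_nonneg)
  qed
qed

lemma partial_monomial_commutator:
  "partial_monomial B \<Longrightarrow> partial_monomial (commutator B a)"
  unfolding partial_monomial_def by (auto simp: commutator_nth)

lemma partial_monomial_if_supported_on_disjoint_edges:
  assumes disjoint: "\<forall>s<k. \<forall>t<k. s \<noteq> t \<longrightarrow> {i s, j s} \<inter> {i t, j t} = {}"
    and support: "\<And>p q. B$p$q \<noteq> 0 \<Longrightarrow> \<exists>s<k. {p, q} = {i s, j s}"
  shows "partial_monomial B"
proof -
  have same_edge: "q = q'" if "{p, q} = {i s, j s}" "{p, q'} = {i t, j t}" "s < k" "t < k"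
    for p q q' s t
  proof -
    have "p \<in> {i s, j s} \<inter> {i t, j t}"
      using that(1,2) by (metis IntI insertI1)
    then have "s = t"
      using disjoint that(3,4) by blast
    then have "{p, q} = {p, q'}"
      using that(1,2) by simp
    then show ?thesis
      by (auto simp: doubleton_eq_iff)
  qed
  show ?thesis
    unfolding partial_monomial_def
  proof (intro conjI allI impI)
    fix p q q' assume "B$p$q \<noteq> 0" "B$p$q' \<noteq> 0"
    obtain s t where "{p, q} = {i s, j s}" "{p, q'} = {i t, j t}" "s < k" "t < k"
      using support[OF \<open>B$p$q \<noteq> 0\<close>] support[OF \<open>B$p$q' \<noteq> 0\<close>] by auto
    then show "q = q'"
      by (rule same_edge)
  next
    fix p p' q assume "B$p$q \<noteq> 0" "B$p'$q \<noteq> 0"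
    obtain s t where "{p, q} = {i s, j s}" "{p', q} = {i t, j t}" "s < k" "t < k"
      using support[OF \<open>B$p$q \<noteq> 0\<close>] support[OF \<open>B$p'$q \<noteq> 0\<close>] by auto
    then have "{q, p} = {i s, j s}" "{q, p'} = {i t, j t}" "s < k" "t < k"
      by (simp_all add: insert_commute)
    then show "p = p'"
      by (rule same_edge)
  qed
qed

lemma self_adjoint_diff:
  assumes "self_adjoint A" "self_adjoint B"
  shows "self_adjoint (A - B)"
  using assms unfolding self_adjoint_def by (metis complex_cnj_diff vector_minus_component)

lemma self_adjoint_norm_nth_doubleton:
  assumes "self_adjoint M" "{p, q} = {i, j}"
  shows "cmod (M$p$q) = cmod (M$i$j)"
  using assms unfolding self_adjoint_def
  by (metis complex_mod_cnj doubleton_eq_iff)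

lemma bounded_differences_along_path:
  fixes M :: "complex^'n::finite^'n"
  assumes "(i, j) \<in> (graph_edges M)\<^sup>*"
  shows "\<exists>B. \<forall>a. commutator_norm M a \<le> 1 \<longrightarrow> cmod (a i - a j) \<le> B"
  using assms
proof (induction rule: rtrancl_induct)
  case base
  then show ?case by auto
next
  case (step j l)
  then obtain B where B: "\<forall>a. commutator_norm M a \<le> 1 \<longrightarrow> cmod (a i - a j) \<le> B"
    by blast
  have "M$j$l \<noteq> 0"
    using step(2) by (simp add: graph_edges_def)
  have "cmod (a i - a l) \<le> B + 1 / cmod (M$j$l)" if a: "commutator_norm M a \<le> 1" for a
  proof -
    have "cmod (M$j$l) * cmod (a j - a l) \<le> 1"
      using norm_nth_mult_le_commutator_norm a by (rule order_trans)
    then have "cmod (a j - a l) \<le> 1 / cmod (M$j$l)"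
      using \<open>M$j$l \<noteq> 0\<close> by (simp add: field_simps)
    moreover have "cmod (a i - a l) \<le> cmod (a i - a j) + cmod (a j - a l)"
      using norm_triangle_ineq[of "a i - a j" "a j - a l"] by simp
    ultimately show ?thesis
      using B a by fastforce
  qed
  then show ?case by blast
qed

lemma bdd_above_nc_dist_set:
  assumes "graph_connected M"
  shows "bdd_above {cmod (a i - a j) | a. commutator_norm M a \<le> 1}"
  using bounded_differences_along_path[of i j M] assms
  unfolding graph_connected_def bdd_above_def by blast

lemma norm_diff_le_nc_dist:
  assumes "graph_connected M" "commutator_norm M a \<le> 1"
  shows "cmod (a i - a j) \<le> nc_dist M i j"
  unfolding nc_dist_def
  by (rule cSup_upper) (use assms bdd_above_nc_dist_set in auto)

lemma nc_dist_le:
  assumes "\<And>a. commutator_norm M a \<le> 1 \<Longrightarrow> cmod (a i - a j) \<le> c"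
  shows "nc_dist M i j \<le> c"
proof -
  have "commutator_norm M (\<lambda>_. 0) \<le> 1"
    by (simp add: commutator_norm_zero)
  then have "{cmod (a i - a j) | a. commutator_norm M a \<le> 1} \<noteq> {}"
    by blast
  then show ?thesis
    unfolding nc_dist_def by (rule cSup_least) (use assms in blast)
qed

lemma norm_diff_le_scaled_nc_dist:
  assumes "graph_connected M" "commutator_norm M a \<le> C" "0 < C"
  shows "cmod (a i - a j) \<le> C * nc_dist M i j"
proof -
  have "commutator_norm M (\<lambda>p. of_real (1 / C) * a p) = commutator_norm M a / C"
    using assms(3) by (subst commutator_norm_scale) simp
  also have "\<dots> \<le> 1"
    using assms(2,3) by simp
  finally have "cmod (of_real (1 / C) * a i - of_real (1 / C) * a j) \<le> nc_dist M i j"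
    by (rule norm_diff_le_nc_dist[OF assms(1)])
  then show ?thesis
    using assms(3) by (simp add: diff_divide_distrib[symmetric] norm_divide pos_divide_le_eq mult.commute)
qed

lemma nc_dist_commute: "nc_dist M i j = nc_dist M j i"
  unfolding nc_dist_def by (simp add: norm_minus_commute)

lemma nc_dist_nonneg: "graph_connected M \<Longrightarrow> 0 \<le> nc_dist M i j"
  using norm_diff_le_nc_dist[of M "\<lambda>_. 0"] by (simp add: commutator_norm_zero)

lemma nc_dist_pos:
  assumes "graph_connected M" "x \<noteq> y"
  shows "0 < nc_dist M x y"
proof -
  define a where "a = (\<lambda>p. if p = x then (1::complex) else 0)"
  have K: "0 \<le> commutator_norm M a"
    by (rule commutator_norm_nonneg)
  have "cmod (a x - a y) \<le> (1 + commutator_norm M a) * nc_dist M x y"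
    by (rule norm_diff_le_scaled_nc_dist[OF assms(1)]) (use K in auto)
  then have "0 < (1 + commutator_norm M a) * nc_dist M x y"
    using assms(2) by (simp add: a_def)
  then show ?thesis
    using K by (simp add: zero_less_mult_iff)
qed

lemma nc_dist_le_perturbation:
  fixes D D' :: "complex^'n::finite^'n"
  assumes "graph_connected D" "graph_connected D'" "partial_monomial (D' - D)"
    and entry_le: "\<And>p q. cmod (D'$p$q - D$p$q) * nc_dist D p q \<le> m"
  shows "nc_dist D x y \<le> (1 + m) * nc_dist D' x y"
proof (rule nc_dist_le)
  fix a assume a: "commutator_norm D a \<le> 1"
  have "0 \<le> cmod (D'$x$x - D$x$x) * nc_dist D x x"
    using nc_dist_nonneg[OF assms(1)] by simp
  then have "m \<ge> 0"
    using entry_le[of x x] by linarith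
  have "cmod (commutator (D' - D) a $ p $ q) \<le> m" for p q
  proof -
    have "cmod (a q - a p) \<le> nc_dist D p q"
      using norm_diff_le_nc_dist[OF assms(1) a] nc_dist_commute by metis
    then have "cmod (commutator (D' - D) a $ p $ q) \<le> cmod (D'$p$q - D$p$q) * nc_dist D p q"
      by (simp add: commutator_nth norm_mult mult_left_mono)
    then show ?thesis
      using entry_le[of p q] by (rule order_trans)
  qed
  then have "commutator_norm (D' - D) a \<le> m"
    unfolding commutator_norm_eq_onorm
    by (intro onorm_partial_monomial_le partial_monomial_commutator assms(3))
  then have "commutator_norm D' a \<le> 1 + m"
    using a commutator_norm_add_le[of D "D' - D" a] by simp
  then show "cmod (a x - a y) \<le> (1 + m) * nc_dist D' x y"
    using \<open>m \<ge> 0\<close> by (intro norm_diff_le_scaled_nc_dist[OF assms(2)]) auto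
qed

lemma nc_dist_le_after_changing_disjoint_edges:
  fixes D D' :: "complex^'n::finite^'n"
  assumes "self_adjoint D" "self_adjoint D'" "graph_connected D" "graph_connected D'"
    and disjoint: "\<forall>s<k. \<forall>t<k. s \<noteq> t \<longrightarrow> {i s, j s} \<inter> {i t, j t} = {}"
    and changed: "\<And>p q. D'$p$q \<noteq> D$p$q \<Longrightarrow> \<exists>s<k. {p, q} = {i s, j s}"
    and weight: "\<And>s. s < k \<Longrightarrow> cmod (D'$(i s)$(j s) - D$(i s)$(j s)) \<le> 1 / w s"
    and ratio_le: "\<And>s. s < k \<Longrightarrow> nc_dist D (i s) (j s) / w s \<le> m" and "0 \<le> m"
  shows "nc_dist D x y \<le> (1 + m) * nc_dist D' x y"
proof (rule nc_dist_le_perturbation)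
  show "partial_monomial (D' - D)"
    using disjoint changed by (intro partial_monomial_if_supported_on_disjoint_edges) auto
  show "cmod (D'$p$q - D$p$q) * nc_dist D p q \<le> m" for p q
  proof (cases "D'$p$q = D$p$q")
    case True
    then show ?thesis using \<open>0 \<le> m\<close> by simp
  next
    case False
    then obtain s where s: "s < k" "{p, q} = {i s, j s}"
      using changed by blast
    have "cmod (D'$p$q - D$p$q) = cmod (D'$(i s)$(j s) - D$(i s)$(j s))"
      using self_adjoint_norm_nth_doubleton[OF self_adjoint_diff[OF assms(2,1)] s(2)] by simp
    moreover have "nc_dist D p q = nc_dist D (i s) (j s)"
      using s(2) nc_dist_commute by (metis doubleton_eq_iff)
    ultimately have "cmod (D'$p$q - D$p$q) * nc_dist D p q
        = cmod (D'$(i s)$(j s) - D$(i s)$(j s)) * nc_dist D (i s) (j s)"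
      by simp
    also have "\<dots> \<le> 1 / w s * nc_dist D (i s) (j s)"
      by (rule mult_right_mono[OF weight[OF s(1)] nc_dist_nonneg[OF assms(3)]])
    also have "\<dots> \<le> m"
      using ratio_le[OF s(1)] by simp
    finally show ?thesis .
  qed
qed (use assms in auto)

lemma abs_inverse_diff_le:
  fixes d d' w :: real
  assumes "0 < d" "0 < d'" "0 < w" "d \<le> (1 + d / w) * d'" "d' \<le> (1 + d' / w) * d"
  shows "\<bar>1 / d - 1 / d'\<bar> \<le> 1 / w"
proof -
  have "1 / d' - 1 / d \<le> 1 / w"
    using assms by (simp add: field_simps)
  moreover have "1 / d - 1 / d' \<le> 1 / w"
    using assms by (simp add: field_simps)
  ultimately show ?thesis
    by (simp add: abs_le_iff)
qed

lemma nc_dist_ratio_Max_nonneg: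
  fixes k :: nat
  assumes "graph_connected M" "0 < k" "\<And>s. s < k \<Longrightarrow> 0 < w s"
  shows "0 \<le> Max ((\<lambda>s. nc_dist M (i s) (j s) / w s) ` {..<k})"
proof -
  have "0 \<le> nc_dist M (i 0) (j 0) / w 0"
    using assms by (intro divide_nonneg_pos nc_dist_nonneg) auto
  also have "\<dots> \<le> Max ((\<lambda>s. nc_dist M (i s) (j s) / w s) ` {..<k})"
    using assms(2) by (intro Max_ge) auto
  finally show ?thesis .
qed

lemma differing_entries_on_edges:
  assumes "\<forall>p q. (\<forall>s<k. (p, q) \<noteq> (i s, j s) \<and> (p, q) \<noteq> (j s, i s)) \<longrightarrow> A$p$q = B$p$q"
    and "A$p$q \<noteq> B$p$q"
  shows "\<exists>s<k. {p, q} = {i s, j s}"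
proof -
  obtain s where "s < k" "(p, q) = (i s, j s) \<or> (p, q) = (j s, i s)"
    using assms by blast
  then show ?thesis
    by auto
qed

theorem mainTheorem2:
  fixes D D' :: "complex^'n::finite^'n"
    and k :: nat and i j :: "nat \<Rightarrow> 'n" and w :: "nat \<Rightarrow> real" and x y :: 'n
  assumes "self_adjoint D" and "self_adjoint D'"
    and "graph_connected D" and "graph_connected D'"
    and "k \<ge> 1"
    and "\<forall>s<k. i s \<noteq> j s"
    and "\<forall>s<k. \<forall>t<k. s \<noteq> t \<longrightarrow> {i s, j s} \<inter> {i t, j t} = {}"
    and "\<forall>p q. (\<forall>s<k. (p, q) \<noteq> (i s, j s) \<and> (p, q) \<noteq> (j s, i s)) \<longrightarrow> D$p$q = D'$p$q"
    and "\<forall>s<k. w s > 0 \<and>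
           ((D$(i s)$(j s) = 0 \<and> cmod (D'$(i s)$(j s)) = 1 / w s) \<or>
            (D'$(i s)$(j s) = 0 \<and> cmod (D$(i s)$(j s)) = 1 / w s))"
  shows "(let d = nc_dist D x y; d' = nc_dist D' x y;
              m = Max ((\<lambda>s. nc_dist D (i s) (j s) / w s) ` {..<k});
              m' = Max ((\<lambda>s. nc_dist D' (i s) (j s) / w s) ` {..<k})
          in d / (1 + m) \<le> d' \<and> d' \<le> (1 + m') * d
             \<and> ((k = 1 \<and> {i 0, j 0} = {x, y}) \<longrightarrow> \<bar>1 / d - 1 / d'\<bar> \<le> 1 / w 0))"
proof -
  define d where "d = nc_dist D x y"
  define d' where "d' = nc_dist D' x y"
  define m where "m = Max ((\<lambda>s. nc_dist D (i s) (j s) / w s) ` {..<k})"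
  define m' where "m' = Max ((\<lambda>s. nc_dist D' (i s) (j s) / w s) ` {..<k})"
  have w_pos: "0 < w s" and weight: "cmod (D'$(i s)$(j s) - D$(i s)$(j s)) = 1 / w s"
    if "s < k" for s
    using assms(9) that by auto
  have changed: "\<exists>s<k. {p, q} = {i s, j s}" if "D$p$q \<noteq> D'$p$q" for p q
    using assms(8) that by (rule differing_entries_on_edges)
  have "0 \<le> m" "0 \<le> m'"
    unfolding m_def m'_def using assms(3-5) w_pos by (auto intro: nc_dist_ratio_Max_nonneg)
  have le: "d \<le> (1 + m) * d'"
    unfolding d_def d'_def
    by (rule nc_dist_le_after_changing_disjoint_edges[OF assms(1-4,7)])
      (use changed weight \<open>0 \<le> m\<close> in \<open>auto simp: m_def\<close>)
  have le': "d' \<le> (1 + m') * d"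
    unfolding d_def d'_def
    by (rule nc_dist_le_after_changing_disjoint_edges[OF assms(2,1,4,3,7)])
      (use changed weight \<open>0 \<le> m'\<close> in \<open>auto simp: m'_def norm_minus_commute\<close>)
  have "\<bar>1 / d - 1 / d'\<bar> \<le> 1 / w 0" if "k = 1" "{i 0, j 0} = {x, y}"
  proof (rule abs_inverse_diff_le)
    have "x \<noteq> y" "0 < w 0"
      using assms(6) w_pos that by (auto simp: doubleton_eq_iff)
    then show "0 < d" "0 < d'" "0 < w 0"
      unfolding d_def d'_def using nc_dist_pos assms(3,4) by auto
    have "m = d / w 0" "m' = d' / w 0"
      using that nc_dist_commute unfolding m_def m'_def d_def d'_def
      by (auto simp: doubleton_eq_iff lessThan_Suc)
    then show "d \<le> (1 + d / w 0) * d'" "d' \<le> (1 + d' / w 0) * d"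
      using le le' by simp_all
  qed
  moreover have "d / (1 + m) \<le> d'"
    using le \<open>0 \<le> m\<close> by (simp add: divide_le_eq mult.commute)
  ultimately show ?thesis
    unfolding Let_def d_def[symmetric] d'_def[symmetric] m_def[symmetric] m'_def[symmetric]
    using le' by blast
qed

end
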